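(* Let $(L,\nu,\tau)$ be a Šerstnev random normed space whose triangle function $\tau$ is sup-continuous and satisfies $$\tau(F,G)(x)\ \ge\ \sup_{t\in[0,1]}\min\{F(tx),G((1-t)x)\}\qquad\text{for all }x\ge0,\ F,G\in D^+ .$$ Then the family $P_{fc}(L)$ of all nonempty closed convex subsets of $L$ is closed in $P_f(L)$ with respect to the probabilistic Pompeiu–Hausdorff metric $H$; hence $P_{fc}(L)$ is complete with respect to $H$ if $L$ is complete. Moreover, if $L$ is complete, the family $P_{kc}(L)$ of all nonempty compact convex subsets of $L$ is complete with respect to $H$.
   Context: $\Delta^+$ is the set of functions $F:[-\infty,\infty]\to[0,1]$ that are nondecreasing, left-continuous on $\mathbb R$, with $F(-\infty)=0$, $F(\infty)=1$, $F(0)=0$; ordered pointwise; $D^+=\{F\in\Delta^+:\lim_{x\to\infty}F(x)=1\}$; $\epsilon_0(x)=0$ for $x\le0$, $=1$ for $x>0$. Infimum of $\{F_i\}$ in $\Delta^+$: $G(x)=\sup_{x'<x}\inf_iF_i(x')$; supremum pointwise. A triangle function is $\tau:\Delta^+\times\Delta^+\to\Delta^+$ commutative, associative, nondecreasing in each argument, with $\tau(F,\epsilon_0)=F$, continuous for weak convergence. A Šerstnev random normed space $(L,\nu,\tau)$: $L$ a real vector space, $\tau$ a continuous triangle function with $\tau(D^+\times D^+)\subset D^+$, $\nu:L\to D^+$ with $\nu(p)=\epsilon_0\iff p=0$; $\nu(ap)(x)=\nu(p)(x/|a|)$ for $x\ge0$, $a\ne0$; $\nu(p+q)\ge\tau(\nu(p),\nu(q))$.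 It is a probabilistic metric space with $F_{pq}=\nu(p-q)$, topologized by the strong topology with neighborhood base $U_t(p)=\{q:F_{pq}(t)>1-t\}$, $t>0$; completeness and compactness refer to it. $\tau$ is sup-continuous if $\tau(\sup_iF_i,G)=\sup_i\tau(F_i,G)$ for every family $\{F_i\}\subset\Delta^+$, $G\in\Delta^+$. For nonempty $A,B\subset L$: $F_{pB}(x)=\sup_{q\in B}F_{pq}(x)$, $\Gamma^*_{AB}(x)=\inf_{p\in A}F_{pB}(x)$, $F^*_{AB}(x)=\sup_{x'<x}\Gamma^*_{AB}(x')$, $H(A,B)=F_{AB}=\min\{F^*_{AB},F^*_{BA}\}$. $P_f(L)$ is the family of nonempty closed subsets; $A_n\to A$ with respect to $H$ iff for every $t>0$, $F_{A_nA}(t)>1-t$ for all large $n$, and Cauchy sequences/completeness for $H$ are defined analogously; a subfamily is closed in $P_f(L)$ if it contains the $H$-limits in $P_f(L)$ of its convergent sequences. *)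

theory Defs
  imports "HOL-Analysis.Analysis"
begin

text \<open>Distribution functions in Delta+ are represented by their restriction to the
  real line (type real => real); the values at -infinity (0) and +infinity (1) are
  fixed by definition and therefore carry no information.\<close>

type_synonym distf = "real \<Rightarrow> real"

definition delta_plus :: "distf \<Rightarrow> bool" where
  "delta_plus F \<longleftrightarrow> (\<forall>x y. x \<le> y \<longrightarrow> F x \<le> F y) \<and> (\<forall>x. 0 \<le> F x \<and> F x \<le> 1)
     \<and> (\<forall>x. continuous (at_left x) F) \<and> F 0 = 0"

definition D_plus :: "distf \<Rightarrow> bool" where
  "D_plus F \<longleftrightarrow> delta_plus F \<and> (F \<longlongrightarrow> 1) at_top"

definition eps0 :: distf where
  "eps0 x = (if x \<le> 0 then 0 else 1)"

definition weak_conv :: "(nat \<Rightarrow> distf) \<Rightarrow> distf \<Rightarrow> bool" where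
  "weak_conv Fs F \<longleftrightarrow> (\<forall>x. isCont F x \<longrightarrow> (\<lambda>n. Fs n x) \<longlonglongrightarrow> F x)"

definition triangle_function :: "(distf \<Rightarrow> distf \<Rightarrow> distf) \<Rightarrow> bool" where
  "triangle_function \<tau> \<longleftrightarrow>
     (\<forall>F G. delta_plus F \<longrightarrow> delta_plus G \<longrightarrow> delta_plus (\<tau> F G)) \<and>
     (\<forall>F G. delta_plus F \<longrightarrow> delta_plus G \<longrightarrow> \<tau> F G = \<tau> G F) \<and>
     (\<forall>F G K. delta_plus F \<longrightarrow> delta_plus G \<longrightarrow> delta_plus K \<longrightarrow> \<tau> (\<tau> F G) K = \<tau> F (\<tau> G K)) \<and>
     (\<forall>F F' G. delta_plus F \<longrightarrow> delta_plus F' \<longrightarrow> delta_plus G \<longrightarrow> (\<forall>x. F x \<le> F' x)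
        \<longrightarrow> (\<forall>x. \<tau> F G x \<le> \<tau> F' G x)) \<and>
     (\<forall>F. delta_plus F \<longrightarrow> \<tau> F eps0 = F)"

text \<open>Continuity of tau with respect to weak convergence (the topology of weak
  convergence on Delta+ is metrizable, so sequential continuity is used).\<close>
definition continuous_tf :: "(distf \<Rightarrow> distf \<Rightarrow> distf) \<Rightarrow> bool" where
  "continuous_tf \<tau> \<longleftrightarrow>
     (\<forall>Fs F Gs G. (\<forall>n. delta_plus (Fs n)) \<longrightarrow> delta_plus F \<longrightarrow> (\<forall>n. delta_plus (Gs n)) \<longrightarrow>
        delta_plus G \<longrightarrow> weak_conv Fs F \<longrightarrow> weak_conv Gs G \<longrightarrow>
        weak_conv (\<lambda>n. \<tau> (Fs n) (Gs n)) (\<tau> F G))"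

text \<open>Sup-continuity; the supremum of a (nonempty) family in Delta+ is pointwise.
  (For the empty family the condition holds automatically by monotonicity.)\<close>
definition sup_continuous_tf :: "(distf \<Rightarrow> distf \<Rightarrow> distf) \<Rightarrow> bool" where
  "sup_continuous_tf \<tau> \<longleftrightarrow>
     (\<forall>S G. S \<noteq> {} \<longrightarrow> (\<forall>F\<in>S. delta_plus F) \<longrightarrow> delta_plus G \<longrightarrow>
        \<tau> (\<lambda>x. SUP F\<in>S. F x) G = (\<lambda>x. SUP F\<in>S. \<tau> F G x))"

definition serstnev_RN_space :: "('a::real_vector \<Rightarrow> distf) \<Rightarrow> (distf \<Rightarrow> distf \<Rightarrow> distf) \<Rightarrow> bool" where
  "serstnev_RN_space \<nu> \<tau> \<longleftrightarrow>
     triangle_function \<tau> \<and> continuous_tf \<tau> \<and>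
     (\<forall>F G. D_plus F \<longrightarrow> D_plus G \<longrightarrow> D_plus (\<tau> F G)) \<and>
     (\<forall>p. D_plus (\<nu> p)) \<and>
     (\<forall>p. \<nu> p = eps0 \<longleftrightarrow> p = 0) \<and>
     (\<forall>p a x. a \<noteq> 0 \<longrightarrow> x \<ge> 0 \<longrightarrow> \<nu> (a *\<^sub>R p) x = \<nu> p (x / \<bar>a\<bar>)) \<and>
     (\<forall>p q x. \<tau> (\<nu> p) (\<nu> q) x \<le> \<nu> (p + q) x)"

text \<open>Strong topology: neighbourhood base U_t(p) = {q. F_pq(t) > 1 - t}, F_pq = nu(p - q).\<close>
definition U_nbhd :: "('a::real_vector \<Rightarrow> distf) \<Rightarrow> real \<Rightarrow> 'a \<Rightarrow> 'a set" where
  "U_nbhd \<nu> t p = {q. \<nu> (p - q) t > 1 - t}"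

definition s_open :: "('a::real_vector \<Rightarrow> distf) \<Rightarrow> 'a set \<Rightarrow> bool" where
  "s_open \<nu> V \<longleftrightarrow> (\<forall>p\<in>V. \<exists>t>0. U_nbhd \<nu> t p \<subseteq> V)"

definition s_closed :: "('a::real_vector \<Rightarrow> distf) \<Rightarrow> 'a set \<Rightarrow> bool" where
  "s_closed \<nu> A \<longleftrightarrow> s_open \<nu> (- A)"

definition s_compact :: "('a::real_vector \<Rightarrow> distf) \<Rightarrow> 'a set \<Rightarrow> bool" where
  "s_compact \<nu> K \<longleftrightarrow> (\<forall>\<C>. (\<forall>V\<in>\<C>. s_open \<nu> V) \<longrightarrow> K \<subseteq> \<Union>\<C> \<longrightarrow>
      (\<exists>\<D>\<subseteq>\<C>. finite \<D> \<and> K \<subseteq> \<Union>\<D>))"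

definition s_cauchy :: "('a::real_vector \<Rightarrow> distf) \<Rightarrow> (nat \<Rightarrow> 'a) \<Rightarrow> bool" where
  "s_cauchy \<nu> p \<longleftrightarrow> (\<forall>t>0. \<exists>N. \<forall>m\<ge>N. \<forall>n\<ge>N. \<nu> (p m - p n) t > 1 - t)"

definition s_converges :: "('a::real_vector \<Rightarrow> distf) \<Rightarrow> (nat \<Rightarrow> 'a) \<Rightarrow> 'a \<Rightarrow> bool" where
  "s_converges \<nu> p l \<longleftrightarrow> (\<forall>t>0. \<exists>N. \<forall>n\<ge>N. \<nu> (p n - l) t > 1 - t)"

definition s_complete :: "('a::real_vector \<Rightarrow> distf) \<Rightarrow> bool" where
  "s_complete \<nu> \<longleftrightarrow> (\<forall>p. s_cauchy \<nu> p \<longrightarrow> (\<exists>l. s_converges \<nu> p l))"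

definition F_pt_set :: "('a::real_vector \<Rightarrow> distf) \<Rightarrow> 'a \<Rightarrow> 'a set \<Rightarrow> distf" where
  "F_pt_set \<nu> p B = (\<lambda>x. SUP q\<in>B. \<nu> (p - q) x)"

definition Gamma_star :: "('a::real_vector \<Rightarrow> distf) \<Rightarrow> 'a set \<Rightarrow> 'a set \<Rightarrow> distf" where
  "Gamma_star \<nu> A B = (\<lambda>x. INF p\<in>A. F_pt_set \<nu> p B x)"

definition F_star :: "('a::real_vector \<Rightarrow> distf) \<Rightarrow> 'a set \<Rightarrow> 'a set \<Rightarrow> distf" where
  "F_star \<nu> A B = (\<lambda>x. SUP x'\<in>{..<x}. Gamma_star \<nu> A B x')"

definition H_metric :: "('a::real_vector \<Rightarrow> distf) \<Rightarrow> 'a set \<Rightarrow> 'a set \<Rightarrow> distf" where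
  "H_metric \<nu> A B = (\<lambda>x. min (F_star \<nu> A B x) (F_star \<nu> B A x))"

definition P_f :: "('a::real_vector \<Rightarrow> distf) \<Rightarrow> 'a set set" where
  "P_f \<nu> = {A. A \<noteq> {} \<and> s_closed \<nu> A}"

definition P_fc :: "('a::real_vector \<Rightarrow> distf) \<Rightarrow> 'a set set" where
  "P_fc \<nu> = {A. A \<noteq> {} \<and> s_closed \<nu> A \<and> convex A}"

definition P_kc :: "('a::real_vector \<Rightarrow> distf) \<Rightarrow> 'a set set" where
  "P_kc \<nu> = {A. A \<noteq> {} \<and> s_compact \<nu> A \<and> convex A}"

definition H_converges :: "('a::real_vector \<Rightarrow> distf) \<Rightarrow> (nat \<Rightarrow> 'a set) \<Rightarrow> 'a set \<Rightarrow> bool" where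
  "H_converges \<nu> As A \<longleftrightarrow> (\<forall>t>0. \<exists>N. \<forall>n\<ge>N. H_metric \<nu> (As n) A t > 1 - t)"

definition H_cauchy :: "('a::real_vector \<Rightarrow> distf) \<Rightarrow> (nat \<Rightarrow> 'a set) \<Rightarrow> bool" where
  "H_cauchy \<nu> As \<longleftrightarrow> (\<forall>t>0. \<exists>N. \<forall>m\<ge>N. \<forall>n\<ge>N. H_metric \<nu> (As m) (As n) t > 1 - t)"

definition H_closed_in_P_f :: "('a::real_vector \<Rightarrow> distf) \<Rightarrow> 'a set set \<Rightarrow> bool" where
  "H_closed_in_P_f \<nu> \<A> \<longleftrightarrow>
     (\<forall>As A. (\<forall>n. As n \<in> \<A>) \<longrightarrow> A \<in> P_f \<nu> \<longrightarrow> H_converges \<nu> As A \<longrightarrow> A \<in> \<A>)"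

definition H_complete :: "('a::real_vector \<Rightarrow> distf) \<Rightarrow> 'a set set \<Rightarrow> bool" where
  "H_complete \<nu> \<A> \<longleftrightarrow>
     (\<forall>As. (\<forall>n. As n \<in> \<A>) \<longrightarrow> H_cauchy \<nu> As \<longrightarrow> (\<exists>A\<in>\<A>. H_converges \<nu> As A))"

end

theory Submission
  imports Defs
begin

text \<open>If \<tau> dominates the minimum triangle function \<tau>_M, then
  d(p, q) = inf {t. \<nu>(p - q)(t) > 1 - t} is a metric on L whose balls are sandwiched between
  the strong neighbourhoods U_t(p), so the strong topology, completeness and compactness
  are the metric ones. Moreover H(A, B)(t) > 1 - t says, up to an arbitrarily small change of t,
  that A and B lie within Hausdorff distance t of each other for d. The theorem thus reduces to
  the classical facts that the Hausdorff limit of a Cauchy sequence of closed sets in a complete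
  metric space exists (it is the upper limit of the sequence) and is compact if the sets are.
  Convexity passes to the limit because
  d(u x + v y, u x' + v y') \<le> max (d(x, x'), d(y, y')), which follows from the Serstnev
  scaling law together with \<tau> \<ge> \<tau>_M.\<close>

section \<open>Hausdorff closeness in metric spaces\<close>

definition hausdorff_close :: "('a \<Rightarrow> 'a \<Rightarrow> real) \<Rightarrow> 'a set \<Rightarrow> 'a set \<Rightarrow> real \<Rightarrow> bool" where
  "hausdorff_close d A B e \<longleftrightarrow> (\<forall>a\<in>A. \<exists>b\<in>B. d a b \<le> e) \<and> (\<forall>b\<in>B. \<exists>a\<in>A. d a b \<le> e)"

definition hausdorff_limit :: "('a \<Rightarrow> 'a \<Rightarrow> real) \<Rightarrow> (nat \<Rightarrow> 'a set) \<Rightarrow> 'a set \<Rightarrow> bool" where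
  "hausdorff_limit d As A \<longleftrightarrow> (\<forall>e>0. \<exists>N. \<forall>n\<ge>N. hausdorff_close d (As n) A e)"

definition hausdorff_Cauchy :: "('a \<Rightarrow> 'a \<Rightarrow> real) \<Rightarrow> (nat \<Rightarrow> 'a set) \<Rightarrow> bool" where
  "hausdorff_Cauchy d As \<longleftrightarrow> (\<forall>e>0. \<exists>N. \<forall>m\<ge>N. \<forall>n\<ge>N. hausdorff_close d (As m) (As n) e)"

lemma hausdorff_Cauchy_chain:
  assumes "hausdorff_Cauchy d As" "0 < e"
  obtains N where "\<And>n y. N \<le> n \<Longrightarrow> y \<in> As n \<Longrightarrow>
    \<exists>r x. x 0 = y \<and> (\<forall>k. k \<le> r k \<and> x k \<in> As (r k) \<and> d (x k) (x (Suc k)) \<le> e / 2 ^ k)"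
proof -
  have "\<forall>k. \<exists>N. \<forall>m\<ge>N. \<forall>n\<ge>N. hausdorff_close d (As m) (As n) (e / 2 ^ k)"
    using assms by (simp add: hausdorff_Cauchy_def)
  then obtain Nf where Nf: "\<And>k m n. Nf k \<le> m \<Longrightarrow> Nf k \<le> n \<Longrightarrow> hausdorff_close d (As m) (As n) (e / 2 ^ k)"
    by metis
  have "\<exists>r x. x 0 = y \<and> (\<forall>k. k \<le> r k \<and> x k \<in> As (r k) \<and> d (x k) (x (Suc k)) \<le> e / 2 ^ k)"
    if "Nf 0 \<le> n" "y \<in> As n" for n y
  proof -
    define r where "r = rec_nat n (\<lambda>k i. max (Suc i) (Nf (Suc k)))"
    have r_0: "r 0 = n" and r_Suc: "r (Suc k) = max (Suc (r k)) (Nf (Suc k))" for k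
      by (simp_all add: r_def)
    have r_ge: "Nf k \<le> r k \<and> k \<le> r k" for k
      using that(1) by (induction k) (auto simp: r_0 r_Suc)
    have "\<exists>x. \<forall>k. (x k \<in> As (r k) \<and> (k = 0 \<longrightarrow> x k = y)) \<and> d (x k) (x (Suc k)) \<le> e / 2 ^ k"
    proof (rule dependent_nat_choice)
      show "\<exists>z. z \<in> As (r 0) \<and> (0 = (0::nat) \<longrightarrow> z = y)"
        using that(2) r_0 by blast
    next
      fix z k
      assume "z \<in> As (r k) \<and> (k = 0 \<longrightarrow> z = y)"
      moreover have "hausdorff_close d (As (r k)) (As (r (Suc k))) (e / 2 ^ k)"
        using r_ge[of k] by (intro Nf) (auto simp: r_Suc)
      ultimately show "\<exists>w. (w \<in> As (r (Suc k)) \<and> (Suc k = 0 \<longrightarrow> w = y)) \<and> d z w \<le> e / 2 ^ k"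
        by (auto simp: hausdorff_close_def)
    qed
    then show ?thesis
      using r_ge by blast
  qed
  then show thesis
    using that by blast
qed

context Metric_space
begin

lemma geometric_chain_dist_le:
  assumes "range x \<subseteq> M" "\<And>k. d (x k) (x (Suc k)) \<le> c / 2 ^ k" "k \<le> m"
  shows "d (x k) (x m) \<le> 2 * c / 2 ^ k"
proof -
  have partial: "d (x k) (x (k + j)) \<le> 2 * c / 2 ^ k - 2 * c / 2 ^ (k + j)" for j
  proof (induction j)
    case (Suc j)
    have "d (x k) (x (k + Suc j)) \<le> d (x k) (x (k + j)) + d (x (k + j)) (x (Suc (k + j)))"
      using assms(1) by (simp add: triangle range_subsetD)
    also have "\<dots> \<le> 2 * c / 2 ^ k - 2 * c / 2 ^ (k + j) + c / 2 ^ (k + j)"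
      using Suc assms(2) by (intro add_mono)
    finally show ?case
      by simp
  qed (use assms(1) in \<open>simp add: range_subsetD\<close>)
  have "0 \<le> c"
    using assms(2)[of 0] nonneg[of "x 0" "x (Suc 0)"] by (simp del: nonneg)
  then have "0 \<le> 2 * c / 2 ^ m"
    by simp
  then show ?thesis
    using partial[of "m - k"] assms(3) by simp
qed

lemma MCauchy_geometric_chain:
  assumes "range x \<subseteq> M" "\<And>k. d (x k) (x (Suc k)) \<le> c / 2 ^ k"
  shows "MCauchy x"
  unfolding MCauchy_def
proof (intro conjI allI impI assms(1))
  fix \<epsilon> :: real
  assume "0 < \<epsilon>"
  have "(\<lambda>K. 2 * c / 2 ^ K) \<longlonglongrightarrow> 0"
    by (rule LIMSEQ_divide_realpow_zero) simp
  from order_tendstoD(2)[OF this, of "\<epsilon> / 2"] \<open>0 < \<epsilon>\<close>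
  obtain K where K: "2 * c / 2 ^ K < \<epsilon> / 2"
    by (auto simp: eventually_sequentially)
  have "d (x m) (x n) < \<epsilon>" if "K \<le> m" "K \<le> n" for m n
  proof -
    have "d (x m) (x n) \<le> d (x K) (x m) + d (x K) (x n)"
      using assms(1) triangle[of "x m" "x K" "x n"] by (simp add: commute range_subsetD)
    also have "\<dots> \<le> 2 * c / 2 ^ K + 2 * c / 2 ^ K"
      using geometric_chain_dist_le[OF assms] that by (intro add_mono)
    finally show ?thesis
      using K by linarith
  qed
  then show "\<exists>K. \<forall>m n. K \<le> m \<longrightarrow> K \<le> n \<longrightarrow> d (x m) (x n) < \<epsilon>"
    by blast
qed

lemma limit_of_geometric_chain:
  assumes "mcomplete" "range x \<subseteq> M" "\<And>k. d (x k) (x (Suc k)) \<le> c / 2 ^ k"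
  obtains l where "limitin mtopology x l sequentially" "\<And>k. d (x k) l \<le> 2 * c / 2 ^ k"
proof -
  have "MCauchy x"
    using assms(2,3) by (rule MCauchy_geometric_chain)
  with assms(1) obtain l where l: "limitin mtopology x l sequentially"
    unfolding mcomplete_def by blast
  moreover have "d (x k) l \<le> 2 * c / 2 ^ k" for k
  proof (rule field_le_epsilon)
    fix \<epsilon> :: real
    assume "0 < \<epsilon>"
    then obtain N where N: "\<forall>n\<ge>N. d (x n) l < \<epsilon>"
      using l unfolding limit_metric_sequentially by blast
    have "l \<in> M"
      using l limitin_mspace by blast
    then have "d (x k) l \<le> d (x k) (x (max k N)) + d (x (max k N)) l"
      using assms(2) by (simp add: triangle range_subsetD)
    also have "\<dots> \<le> 2 * c / 2 ^ k + \<epsilon>"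
      using geometric_chain_dist_le[OF assms(2,3), of k "max k N"] N[rule_format, of "max k N"]
      by (intro add_mono) auto
    finally show "d (x k) l \<le> 2 * c / 2 ^ k + \<epsilon>" .
  qed
  ultimately show thesis
    using that by blast
qed

definition upper_limit :: "(nat \<Rightarrow> 'a set) \<Rightarrow> 'a set" where
  "upper_limit As = (\<Inter>N. mtopology closure_of (\<Union>n\<in>{N..}. As n))"

lemma closedin_upper_limit: "closedin mtopology (upper_limit As)"
  unfolding upper_limit_def by (intro closedin_Inter) auto

lemma upper_limit_near_hausdorff_Cauchy:
  assumes sub: "\<And>n. As n \<subseteq> M" and Cauchy: "hausdorff_Cauchy d As" and "0 < e"
  obtains N where "\<And>n a. N \<le> n \<Longrightarrow> a \<in> upper_limit As \<Longrightarrow> \<exists>b\<in>As n. d b a \<le> e"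
proof -
  obtain N where N: "\<forall>m\<ge>N. \<forall>n\<ge>N. hausdorff_close d (As m) (As n) (e / 2)"
    using Cauchy \<open>0 < e\<close> unfolding hausdorff_Cauchy_def by (meson half_gt_zero)
  have "\<exists>b\<in>As n. d b a \<le> e" if "N \<le> n" "a \<in> upper_limit As" for n a
  proof -
    have "a \<in> mtopology closure_of (\<Union>m\<in>{N..}. As m)"
      using \<open>a \<in> upper_limit As\<close> by (auto simp: upper_limit_def)
    then have "a \<in> M" "\<exists>y\<in>(\<Union>m\<in>{N..}. As m). y \<in> mball a (e / 2)"
      using half_gt_zero[OF \<open>0 < e\<close>] unfolding metric_closure_of by blast+
    then obtain m y where "N \<le> m" "y \<in> As m" "d a y < e / 2"
      by auto
    moreover obtain b where "b \<in> As n" "d y b \<le> e / 2"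
      using N \<open>N \<le> m\<close> \<open>N \<le> n\<close> \<open>y \<in> As m\<close> by (meson hausdorff_close_def)
    moreover have "d b a \<le> d y b + d a y"
      using sub \<open>y \<in> As m\<close> \<open>b \<in> As n\<close> \<open>a \<in> M\<close> triangle[of b y a] commute[of b y] commute[of y a]
      by auto
    ultimately show ?thesis
      by force
  qed
  then show thesis
    using that by blast
qed

lemma near_upper_limit_hausdorff_Cauchy:
  assumes "mcomplete" and sub: "\<And>n. As n \<subseteq> M" and Cauchy: "hausdorff_Cauchy d As" and "0 < e"
  obtains N where "\<And>n b. N \<le> n \<Longrightarrow> b \<in> As n \<Longrightarrow> \<exists>a\<in>upper_limit As. d b a \<le> e"
proof -
  obtain N where N: "\<And>n y. N \<le> n \<Longrightarrow> y \<in> As n \<Longrightarrow>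
      \<exists>r x. x 0 = y \<and> (\<forall>k. k \<le> r k \<and> x k \<in> As (r k) \<and> d (x k) (x (Suc k)) \<le> e / 2 / 2 ^ k)"
    using hausdorff_Cauchy_chain[OF Cauchy half_gt_zero[OF \<open>0 < e\<close>]] by blast
  have "\<exists>a\<in>upper_limit As. d y a \<le> e" if y: "N \<le> n" "y \<in> As n" for n y
  proof -
    obtain r x where x: "x 0 = y" "\<And>k. k \<le> r k" "\<And>k. x k \<in> As (r k)"
      "\<And>k. d (x k) (x (Suc k)) \<le> e / 2 / 2 ^ k"
      using N[OF y] by blast
    then have "range x \<subseteq> M"
      using sub by blast
    then obtain l where l: "limitin mtopology x l sequentially" "\<And>k. d (x k) l \<le> 2 * (e / 2) / 2 ^ k"
      using limit_of_geometric_chain[OF \<open>mcomplete\<close>] x(4) by blast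
    have "l \<in> mtopology closure_of (\<Union>n\<in>{N'..}. As n)" for N'
    proof (rule limitin_closedin[OF l(1)])
      have "x k \<in> mtopology closure_of (\<Union>n\<in>{N'..}. As n)" if "N' \<le> k" for k
        using x(2,3)[of k] sub that by (intro closure_of_subset[THEN subsetD]) force+
      then show "\<forall>\<^sub>F k in sequentially. x k \<in> mtopology closure_of (\<Union>n\<in>{N'..}. As n)"
        unfolding eventually_sequentially by blast
    qed auto
    then have "l \<in> upper_limit As"
      by (simp add: upper_limit_def)
    moreover have "d y l \<le> e"
      using l(2)[of 0] x(1) by simp
    ultimately show ?thesis ..
  qed
  then show thesis
    using that by blast
qed

lemma hausdorff_limit_upper_limit:
  assumes "mcomplete" "\<And>n. As n \<subseteq> M" "hausdorff_Cauchy d As"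
  shows "hausdorff_limit d As (upper_limit As)"
  unfolding hausdorff_limit_def
proof (intro allI impI)
  fix e :: real
  assume "0 < e"
  obtain N1 where N1: "\<And>n a. N1 \<le> n \<Longrightarrow> a \<in> upper_limit As \<Longrightarrow> \<exists>b\<in>As n. d b a \<le> e"
    using upper_limit_near_hausdorff_Cauchy[OF assms(2,3) \<open>0 < e\<close>] by blast
  obtain N2 where N2: "\<And>n b. N2 \<le> n \<Longrightarrow> b \<in> As n \<Longrightarrow> \<exists>a\<in>upper_limit As. d b a \<le> e"
    using near_upper_limit_hausdorff_Cauchy[OF assms \<open>0 < e\<close>] by blast
  have "hausdorff_close d (As n) (upper_limit As) e" if "max N1 N2 \<le> n" for n
    using that N1 N2 unfolding hausdorff_close_def by auto
  then show "\<exists>N. \<forall>n\<ge>N. hausdorff_close d (As n) (upper_limit As) e"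
    by blast
qed

lemma upper_limit_nonempty:
  assumes "mcomplete" "\<And>n. As n \<subseteq> M" "\<And>n. As n \<noteq> {}" "hausdorff_Cauchy d As"
  shows "upper_limit As \<noteq> {}"
proof -
  obtain N where "\<And>n b. N \<le> n \<Longrightarrow> b \<in> As n \<Longrightarrow> \<exists>a\<in>upper_limit As. d b a \<le> 1"
    using near_upper_limit_hausdorff_Cauchy[OF assms(1,2,4) zero_less_one] by blast
  then show ?thesis
    using assms(3)[of N] by blast
qed

lemma mtotally_bounded_if_near_mtotally_bounded:
  assumes "A \<subseteq> M" and near: "\<And>e. 0 < e \<Longrightarrow> \<exists>B. mtotally_bounded B \<and> (\<forall>a\<in>A. \<exists>b\<in>B. d a b \<le> e)"
  shows "mtotally_bounded A"
  unfolding mtotally_bounded_def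
proof (intro allI impI)
  fix \<epsilon> :: real
  assume "0 < \<epsilon>"
  then have "0 < \<epsilon> / 4"
    by simp
  then obtain B where B: "mtotally_bounded B" "\<forall>a\<in>A. \<exists>b\<in>B. d a b \<le> \<epsilon> / 4"
    using near by blast
  obtain F where F: "finite F" "F \<subseteq> B" "B \<subseteq> (\<Union>f\<in>F. mball f (\<epsilon> / 4))"
    using B(1)[unfolded mtotally_bounded_def, rule_format, OF \<open>0 < \<epsilon> / 4\<close>] by (elim exE conjE)
  define F' where "F' = {f \<in> F. \<exists>a\<in>A. d f a < \<epsilon> / 2}"
  have "\<forall>f\<in>F'. \<exists>a. a \<in> A \<and> d f a < \<epsilon> / 2"
    unfolding F'_def by blast
  from bchoice[OF this] obtain g where g: "\<And>f. f \<in> F' \<Longrightarrow> g f \<in> A \<and> d f (g f) < \<epsilon> / 2"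
    by blast
  have "A \<subseteq> (\<Union>c\<in>g ` F'. mball c \<epsilon>)"
  proof
    fix a
    assume "a \<in> A"
    then obtain b where "b \<in> B" "d a b \<le> \<epsilon> / 4"
      using B(2) by blast
    then obtain f where "f \<in> F" "b \<in> mball f (\<epsilon> / 4)"
      using F(3) by blast
    then have "f \<in> M" "b \<in> M" "d f b < \<epsilon> / 4"
      by simp_all
    have "a \<in> M"
      using assms(1) \<open>a \<in> A\<close> by blast
    have "d f a \<le> d f b + d a b"
      using triangle[of f b a] commute[of a b] \<open>f \<in> M\<close> \<open>b \<in> M\<close> \<open>a \<in> M\<close> by simp
    with \<open>d a b \<le> \<epsilon> / 4\<close> \<open>d f b < \<epsilon> / 4\<close> have "d f a < \<epsilon> / 2"
      by linarith
    with \<open>f \<in> F\<close> \<open>a \<in> A\<close> have "f \<in> F'"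
      unfolding F'_def by blast
    have "g f \<in> M"
      using g[OF \<open>f \<in> F'\<close>] assms(1) by blast
    have "d (g f) a \<le> d f (g f) + d f a"
      using triangle[of "g f" f a] commute[of f "g f"] \<open>f \<in> M\<close> \<open>g f \<in> M\<close> \<open>a \<in> M\<close> by simp
    with g[OF \<open>f \<in> F'\<close>] \<open>d f a < \<epsilon> / 2\<close> have "a \<in> mball (g f) \<epsilon>"
      using \<open>g f \<in> M\<close> \<open>a \<in> M\<close> by simp
    with \<open>f \<in> F'\<close> show "a \<in> (\<Union>c\<in>g ` F'. mball c \<epsilon>)"
      by blast
  qed
  moreover have "finite (g ` F')"
    using F(1) by (simp add: F'_def)
  moreover have "g ` F' \<subseteq> A"
    using g by blast
  ultimately show "\<exists>K. finite K \<and> K \<subseteq> A \<and> A \<subseteq> (\<Union>c\<in>K. mball c \<epsilon>)"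
    by (intro exI[of _ "g ` F'"]) simp
qed

lemma compactin_hausdorff_limit:
  assumes "mcomplete" and compact: "\<And>n. compactin mtopology (As n)"
    and closed: "closedin mtopology A" and lim: "hausdorff_limit d As A"
  shows "compactin mtopology A"
proof -
  have "mtotally_bounded A"
  proof (rule mtotally_bounded_if_near_mtotally_bounded)
    show "A \<subseteq> M"
      using closedin_subset[OF closed] by simp
  next
    fix e :: real
    assume "0 < e"
    then obtain n where "hausdorff_close d (As n) A e"
      using lim unfolding hausdorff_limit_def by blast
    then have "\<forall>a\<in>A. \<exists>b\<in>As n. d a b \<le> e"
      by (auto simp: hausdorff_close_def commute)
    then show "\<exists>B. mtotally_bounded B \<and> (\<forall>a\<in>A. \<exists>b\<in>B. d a b \<le> e)"
      using compactin_imp_mtotally_bounded[OF compact] by blast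
  qed
  then have "compactin mtopology (mtopology closure_of A)"
    using mtotally_bounded_eq_compact_closure_of[OF \<open>mcomplete\<close>] by blast
  then show ?thesis
    using closed by (simp add: closure_of_closedin)
qed

end

section \<open>Serstnev spaces under the minimum triangle function\<close>

text \<open>The axiom \<open>nu_add_ge_min\<close> says that (L, \<nu>, \<tau>_M) is itself a Serstnev space;
  it is the only consequence of the hypotheses on \<tau> that the proof uses.\<close>

locale serstnev_tauM_space =
  fixes \<nu> :: "'a::real_vector \<Rightarrow> distf"
  assumes delta_plus_nu: "delta_plus (\<nu> p)"
    and nu_eq_eps0_iff: "\<nu> p = eps0 \<longleftrightarrow> p = 0"
    and nu_scaleR: "a \<noteq> 0 \<Longrightarrow> 0 \<le> x \<Longrightarrow> \<nu> (a *\<^sub>R p) x = \<nu> p (x / \<bar>a\<bar>)"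
    and nu_add_ge_min: "0 < s \<Longrightarrow> 0 < u \<Longrightarrow> min (\<nu> p s) (\<nu> q u) \<le> \<nu> (p + q) (s + u)"

lemma serstnev_tauM_spaceI:
  assumes "serstnev_RN_space \<nu> \<tau>"
    and tau_ge_min: "\<And>F G x t. D_plus F \<Longrightarrow> D_plus G \<Longrightarrow> x \<ge> 0 \<Longrightarrow> t \<in> {0..1} \<Longrightarrow>
           min (F (t * x)) (G ((1 - t) * x)) \<le> \<tau> F G x"
  shows "serstnev_tauM_space \<nu>"
proof
  have D_plus_nu: "D_plus (\<nu> p)" for p
    using assms(1) by (simp add: serstnev_RN_space_def)
  then show "delta_plus (\<nu> p)" for p
    by (simp add: D_plus_def)
  show "\<nu> p = eps0 \<longleftrightarrow> p = 0" "a \<noteq> 0 \<Longrightarrow> 0 \<le> x \<Longrightarrow> \<nu> (a *\<^sub>R p) x = \<nu> p (x / \<bar>a\<bar>)"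
    for p a x using assms(1) by (simp_all add: serstnev_RN_space_def)
  show "min (\<nu> p s) (\<nu> q u) \<le> \<nu> (p + q) (s + u)" if "0 < s" "0 < u" for p q s u
  proof -
    have "s / (s + u) * (s + u) = s" "(1 - s / (s + u)) * (s + u) = u"
      using that by (simp_all add: field_simps)
    then have "min (\<nu> p s) (\<nu> q u) \<le> \<tau> (\<nu> p) (\<nu> q) (s + u)"
      using tau_ge_min[OF D_plus_nu D_plus_nu, of "s + u" "s / (s + u)"] that by simp
    also have "\<dots> \<le> \<nu> (p + q) (s + u)"
      using assms(1) by (simp add: serstnev_RN_space_def)
    finally show ?thesis .
  qed
qed

definition pn_dist :: "('a::real_vector \<Rightarrow> distf) \<Rightarrow> 'a \<Rightarrow> 'a \<Rightarrow> real" where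
  "pn_dist \<nu> p q = Inf {t. q \<in> U_nbhd \<nu> t p}"

context serstnev_tauM_space
begin

lemma nu_mono: "x \<le> y \<Longrightarrow> \<nu> p x \<le> \<nu> p y"
  using delta_plus_nu by (simp add: delta_plus_def)

lemma nu_nonneg: "0 \<le> \<nu> p x"
  using delta_plus_nu by (simp add: delta_plus_def)

lemma nu_le_1: "\<nu> p x \<le> 1"
  using delta_plus_nu by (simp add: delta_plus_def)

lemma nu_nonpos_eq_0: "x \<le> 0 \<Longrightarrow> \<nu> p x = 0"
  using nu_mono[of x 0 p] nu_nonneg[of p x] delta_plus_nu[of p] by (simp add: delta_plus_def)

lemma nu_zero: "\<nu> 0 = eps0"
  by (simp add: nu_eq_eps0_iff)

lemma nu_uminus: "\<nu> (- p) x = \<nu> p x"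
  using nu_scaleR[of "-1" x p] nu_nonpos_eq_0[of x] by (cases "0 \<le> x") simp_all

lemma nu_scaleR_pos: "0 < a \<Longrightarrow> 0 \<le> x \<Longrightarrow> \<nu> (a *\<^sub>R p) (a * x) = \<nu> p x"
  using nu_scaleR[of a "a * x" p] by simp

lemma nu_convex_combination_ge_min:
  assumes "0 \<le> u" "0 \<le> v" "u + v = 1" "0 < x"
  shows "min (\<nu> p x) (\<nu> q x) \<le> \<nu> (u *\<^sub>R p + v *\<^sub>R q) x"
proof (cases "u = 0 \<or> v = 0")
  case True
  with assms show ?thesis by auto
next
  case False
  with assms have "0 < u" "0 < v" by auto
  with assms have "min (\<nu> (u *\<^sub>R p) (u * x)) (\<nu> (v *\<^sub>R q) (v * x))
      \<le> \<nu> (u *\<^sub>R p + v *\<^sub>R q) (u * x + v * x)"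
    by (intro nu_add_ge_min) simp_all
  with \<open>0 < u\<close> \<open>0 < v\<close> assms show ?thesis
    by (simp add: nu_scaleR_pos flip: distrib_right)
qed

lemma mem_U_nbhd_iff: "q \<in> U_nbhd \<nu> t p \<longleftrightarrow> 1 - t < \<nu> (p - q) t"
  by (simp add: U_nbhd_def)

lemma mem_U_nbhd_imp_pos: "q \<in> U_nbhd \<nu> t p \<Longrightarrow> 0 < t"
  using nu_nonpos_eq_0[of t "p - q"] by (force simp: mem_U_nbhd_iff)

lemma mem_U_nbhd_mono: "q \<in> U_nbhd \<nu> s p \<Longrightarrow> s \<le> t \<Longrightarrow> q \<in> U_nbhd \<nu> t p"
  using nu_mono[of s t "p - q"] by (simp add: mem_U_nbhd_iff)

lemma mem_U_nbhd_commute: "q \<in> U_nbhd \<nu> t p \<longleftrightarrow> p \<in> U_nbhd \<nu> t q"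
  using nu_uminus[of "q - p" t] by (simp add: mem_U_nbhd_iff)

lemma mem_U_nbhd_trans:
  assumes "q \<in> U_nbhd \<nu> s p" "r \<in> U_nbhd \<nu> u q"
  shows "r \<in> U_nbhd \<nu> (s + u) p"
proof -
  have "0 < s" "0 < u"
    using assms by (simp_all add: mem_U_nbhd_imp_pos)
  with assms have "1 - (s + u) < min (\<nu> (p - q) s) (\<nu> (q - r) u)"
    by (simp add: mem_U_nbhd_iff)
  also have "\<dots> \<le> \<nu> (p - r) (s + u)"
    using nu_add_ge_min[of s u "p - q" "q - r"] \<open>0 < s\<close> \<open>0 < u\<close> by simp
  finally show ?thesis
    by (simp add: mem_U_nbhd_iff)
qed

lemma centre_in_U_nbhd: "0 < t \<Longrightarrow> p \<in> U_nbhd \<nu> t p"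
  by (simp add: mem_U_nbhd_iff nu_zero eps0_def)

lemma mem_U_nbhd_gt_1: "1 < t \<Longrightarrow> q \<in> U_nbhd \<nu> t p"
  using nu_nonneg[of "p - q" t] by (simp add: mem_U_nbhd_iff)

lemma convex_combination_mem_U_nbhd:
  assumes "p' \<in> U_nbhd \<nu> t p" "q' \<in> U_nbhd \<nu> t q" "0 \<le> u" "0 \<le> v" "u + v = 1"
  shows "u *\<^sub>R p' + v *\<^sub>R q' \<in> U_nbhd \<nu> t (u *\<^sub>R p + v *\<^sub>R q)"
proof -
  have "u *\<^sub>R p + v *\<^sub>R q - (u *\<^sub>R p' + v *\<^sub>R q') = u *\<^sub>R (p - p') + v *\<^sub>R (q - q')"
    by (simp add: algebra_simps)
  with assms nu_convex_combination_ge_min[of u v t "p - p'" "q - q'"] show ?thesis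
    by (auto simp: mem_U_nbhd_iff mem_U_nbhd_imp_pos)
qed

lemma eq_if_mem_all_U_nbhd:
  assumes "\<And>t. 0 < t \<Longrightarrow> q \<in> U_nbhd \<nu> t p"
  shows "q = p"
proof -
  have "\<nu> (p - q) x = eps0 x" for x
  proof (cases "0 < x")
    case True
    have "1 \<le> \<nu> (p - q) x + t" if "0 < t" for t
    proof -
      have "1 - t \<le> 1 - min x t"
        by simp
      also have "\<dots> < \<nu> (p - q) (min x t)"
        using assms[of "min x t"] True that by (simp add: mem_U_nbhd_iff)
      also have "\<dots> \<le> \<nu> (p - q) x"
        by (simp add: nu_mono)
      finally show ?thesis
        by simp
    qed
    then have "1 \<le> \<nu> (p - q) x"
      by (rule field_le_epsilon)
    with True nu_le_1[of "p - q" x] show ?thesis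
      by (simp add: eps0_def)
  qed (simp add: nu_nonpos_eq_0 eps0_def)
  then show ?thesis
    using nu_eq_eps0_iff[of "p - q"] by auto
qed


lemma U_nbhd_radii_nonempty: "{t. q \<in> U_nbhd \<nu> t p} \<noteq> {}"
  using mem_U_nbhd_gt_1[of 2 q p] by auto

lemma U_nbhd_radii_bdd_below: "bdd_below {t. q \<in> U_nbhd \<nu> t p}"
  by (rule bdd_belowI[of _ 0]) (force dest: mem_U_nbhd_imp_pos)

lemma pn_dist_le: "q \<in> U_nbhd \<nu> t p \<Longrightarrow> pn_dist \<nu> p q \<le> t"
  unfolding pn_dist_def by (simp add: cInf_lower U_nbhd_radii_bdd_below)

lemma mem_U_nbhd_if_pn_dist_less:
  assumes "pn_dist \<nu> p q < t"
  shows "q \<in> U_nbhd \<nu> t p"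
proof -
  obtain s where "q \<in> U_nbhd \<nu> s p" "s < t"
    using cInf_lessD[OF U_nbhd_radii_nonempty] assms unfolding pn_dist_def by blast
  then show ?thesis
    by (auto intro: mem_U_nbhd_mono)
qed

lemma pn_dist_nonneg: "0 \<le> pn_dist \<nu> p q"
  unfolding pn_dist_def
  by (intro cInf_greatest U_nbhd_radii_nonempty) (force dest: mem_U_nbhd_imp_pos)

lemma pn_dist_commute: "pn_dist \<nu> p q = pn_dist \<nu> q p"
  unfolding pn_dist_def by (simp add: mem_U_nbhd_commute)

lemma pn_dist_triangle: "pn_dist \<nu> p r \<le> pn_dist \<nu> p q + pn_dist \<nu> q r"
proof (rule field_le_epsilon)
  fix e :: real
  assume "0 < e"
  then have "q \<in> U_nbhd \<nu> (pn_dist \<nu> p q + e / 2) p" "r \<in> U_nbhd \<nu> (pn_dist \<nu> q r + e / 2) q"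
    by (simp_all add: mem_U_nbhd_if_pn_dist_less)
  then have "pn_dist \<nu> p r \<le> pn_dist \<nu> p q + e / 2 + (pn_dist \<nu> q r + e / 2)"
    by (rule pn_dist_le[OF mem_U_nbhd_trans])
  then show "pn_dist \<nu> p r \<le> pn_dist \<nu> p q + pn_dist \<nu> q r + e"
    by simp
qed

lemma pn_dist_eq_0_iff: "pn_dist \<nu> p q = 0 \<longleftrightarrow> p = q"
proof
  assume "pn_dist \<nu> p q = 0"
  then show "p = q"
    by (metis eq_if_mem_all_U_nbhd mem_U_nbhd_if_pn_dist_less)
next
  assume "p = q"
  then have "pn_dist \<nu> p q \<le> t" if "0 < t" for t
    using that by (simp add: centre_in_U_nbhd pn_dist_le)
  then show "pn_dist \<nu> p q = 0"
    by (meson dense_ge order_antisym pn_dist_nonneg)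
qed

sublocale pn: Metric_space UNIV "pn_dist \<nu>"
  by unfold_locales (simp_all add: pn_dist_nonneg pn_dist_commute pn_dist_eq_0_iff pn_dist_triangle)

lemma pn_dist_convex_combination_le:
  assumes "0 \<le> u" "0 \<le> v" "u + v = 1"
  shows "pn_dist \<nu> (u *\<^sub>R p + v *\<^sub>R q) (u *\<^sub>R p' + v *\<^sub>R q') \<le> max (pn_dist \<nu> p p') (pn_dist \<nu> q q')"
proof (rule dense_ge)
  fix t
  assume "max (pn_dist \<nu> p p') (pn_dist \<nu> q q') < t"
  then have "p' \<in> U_nbhd \<nu> t p" "q' \<in> U_nbhd \<nu> t q"
    by (simp_all add: mem_U_nbhd_if_pn_dist_less)
  with assms show "pn_dist \<nu> (u *\<^sub>R p + v *\<^sub>R q) (u *\<^sub>R p' + v *\<^sub>R q') \<le> t"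
    by (intro pn_dist_le convex_combination_mem_U_nbhd)
qed

lemma s_open_iff_openin: "s_open \<nu> V \<longleftrightarrow> openin pn.mtopology V"
proof -
  have mball_subset: "pn.mball p t \<subseteq> U_nbhd \<nu> t p" for p t
    by (auto simp: mem_U_nbhd_if_pn_dist_less)
  have U_nbhd_subset: "U_nbhd \<nu> t p \<subseteq> pn.mball p (2 * t)" for p t
  proof
    fix q
    assume "q \<in> U_nbhd \<nu> t p"
    then have "pn_dist \<nu> p q \<le> t" "0 < t"
      by (simp_all add: pn_dist_le mem_U_nbhd_imp_pos)
    then show "q \<in> pn.mball p (2 * t)"
      by simp
  qed
  show ?thesis
    unfolding s_open_def pn.openin_mtopology
  proof (simp only: subset_UNIV simp_thms, intro iffI allI impI ballI)
    fix p
    assume "\<forall>p\<in>V. \<exists>t>0. U_nbhd \<nu> t p \<subseteq> V" "p \<in> V"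
    then show "\<exists>r>0. pn.mball p r \<subseteq> V"
      using mball_subset by blast
  next
    fix p
    assume "\<forall>p. p \<in> V \<longrightarrow> (\<exists>r>0. pn.mball p r \<subseteq> V)" "p \<in> V"
    then obtain r where "0 < r" "pn.mball p r \<subseteq> V"
      by blast
    then show "\<exists>t>0. U_nbhd \<nu> t p \<subseteq> V"
      using U_nbhd_subset[of "r / 2" p] by (intro exI[of _ "r / 2"]) auto
  qed
qed

lemma s_closed_iff_closedin: "s_closed \<nu> A \<longleftrightarrow> closedin pn.mtopology A"
  by (simp add: s_closed_def closedin_def s_open_iff_openin Compl_eq_Diff_UNIV)

lemma s_compact_iff_compactin: "s_compact \<nu> K \<longleftrightarrow> compactin pn.mtopology K"
proof -
  have "(\<exists>\<D>\<subseteq>\<C>. finite \<D> \<and> K \<subseteq> \<Union>\<D>) \<longleftrightarrow> (\<exists>\<F>. finite \<F> \<and> \<F> \<subseteq> \<C> \<and> K \<subseteq> \<Union>\<F>)" for \<C>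
    by blast
  then show ?thesis
    unfolding s_compact_def compactin_def s_open_iff_openin by (simp add: imp_conjL)
qed

lemma s_cauchy_if_MCauchy:
  assumes "pn.MCauchy \<sigma>"
  shows "s_cauchy \<nu> \<sigma>"
  unfolding s_cauchy_def
proof (intro allI impI)
  fix t :: real
  assume "0 < t"
  then obtain N where "\<forall>m n. N \<le> m \<longrightarrow> N \<le> n \<longrightarrow> pn_dist \<nu> (\<sigma> m) (\<sigma> n) < t"
    using assms unfolding pn.MCauchy_def by blast
  then show "\<exists>N. \<forall>m\<ge>N. \<forall>n\<ge>N. 1 - t < \<nu> (\<sigma> m - \<sigma> n) t"
    using mem_U_nbhd_if_pn_dist_less[unfolded mem_U_nbhd_iff] by blast
qed

lemma limitin_if_s_converges:
  assumes "s_converges \<nu> \<sigma> l"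
  shows "limitin pn.mtopology \<sigma> l sequentially"
  unfolding pn.limit_metric_sequentially
proof (intro conjI allI impI)
  fix e :: real
  assume "0 < e"
  then obtain N where "\<forall>n\<ge>N. l \<in> U_nbhd \<nu> (e / 2) (\<sigma> n)"
    using assms half_gt_zero[OF \<open>0 < e\<close>] unfolding s_converges_def mem_U_nbhd_iff by blast
  then have "\<forall>n\<ge>N. pn_dist \<nu> (\<sigma> n) l \<le> e / 2"
    using pn_dist_le by blast
  with \<open>0 < e\<close> have "\<forall>n\<ge>N. pn_dist \<nu> (\<sigma> n) l < e"
    by force
  then show "\<exists>N. \<forall>n\<ge>N. \<sigma> n \<in> UNIV \<and> pn_dist \<nu> (\<sigma> n) l < e"
    by blast
qed simp

lemma mcomplete_if_s_complete: "s_complete \<nu> \<Longrightarrow> pn.mcomplete"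
  unfolding pn.mcomplete_def s_complete_def
  using s_cauchy_if_MCauchy limitin_if_s_converges by blast

section \<open>The probabilistic Pompeiu--Hausdorff metric\<close>

lemma F_pt_set_bounds:
  assumes "B \<noteq> {}"
  shows "bdd_above ((\<lambda>q. \<nu> (p - q) x) ` B)" "0 \<le> F_pt_set \<nu> p B x" "F_pt_set \<nu> p B x \<le> 1"
proof -
  show bdd: "bdd_above ((\<lambda>q. \<nu> (p - q) x) ` B)"
    by (rule bdd_aboveI2) (rule nu_le_1)
  from assms obtain q where "q \<in> B"
    by blast
  then show "0 \<le> F_pt_set \<nu> p B x"
    unfolding F_pt_set_def by (rule cSUP_upper2[OF bdd]) (rule nu_nonneg)
  show "F_pt_set \<nu> p B x \<le> 1"
    unfolding F_pt_set_def using assms by (rule cSUP_least) (rule nu_le_1)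
qed

lemma Gamma_star_bounds:
  assumes "A \<noteq> {}" "B \<noteq> {}"
  shows "bdd_below ((\<lambda>p. F_pt_set \<nu> p B x) ` A)" "Gamma_star \<nu> A B x \<le> 1"
proof -
  show bdd: "bdd_below ((\<lambda>p. F_pt_set \<nu> p B x) ` A)"
    using F_pt_set_bounds(2)[OF assms(2)] by (rule bdd_belowI2)
  from assms obtain p where "p \<in> A"
    by blast
  then show "Gamma_star \<nu> A B x \<le> 1"
    unfolding Gamma_star_def using F_pt_set_bounds(3)[OF assms(2)] by (rule cINF_lower2[OF bdd])
qed

lemma F_star_gt_imp_mem_U_nbhd:
  assumes "A \<noteq> {}" "B \<noteq> {}" "1 - t < F_star \<nu> A B t" "p \<in> A"
  shows "\<exists>q\<in>B. q \<in> U_nbhd \<nu> t p"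
proof -
  have "bdd_above (Gamma_star \<nu> A B ` {..<t})"
    using Gamma_star_bounds(2)[OF assms(1,2)] by (rule bdd_aboveI2)
  then obtain x where "x < t" and x: "1 - t < Gamma_star \<nu> A B x"
    using assms(3) unfolding F_star_def by (subst (asm) less_cSUP_iff) auto
  have "Gamma_star \<nu> A B x \<le> F_pt_set \<nu> p B x"
    unfolding Gamma_star_def using assms(4) by (rule cINF_lower[OF Gamma_star_bounds(1)[OF assms(1,2)]])
  with x have "1 - t < F_pt_set \<nu> p B x"
    by linarith
  then obtain q where "q \<in> B" "1 - t < \<nu> (p - q) x"
    unfolding F_pt_set_def less_cSUP_iff[OF assms(2) F_pt_set_bounds(1)[OF assms(2)]] ..
  moreover have "\<nu> (p - q) x \<le> \<nu> (p - q) t"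
    using \<open>x < t\<close> by (simp add: nu_mono)
  ultimately have "q \<in> U_nbhd \<nu> t p"
    by (simp add: mem_U_nbhd_iff)
  with \<open>q \<in> B\<close> show ?thesis ..
qed

lemma F_star_gt_if_mem_U_nbhd:
  assumes "A \<noteq> {}" "B \<noteq> {}" "s < t" "\<forall>p\<in>A. \<exists>q\<in>B. q \<in> U_nbhd \<nu> s p"
  shows "1 - t < F_star \<nu> A B t"
proof -
  have "1 - s \<le> Gamma_star \<nu> A B s"
    unfolding Gamma_star_def
  proof (rule cINF_greatest[OF assms(1)])
    fix p
    assume "p \<in> A"
    then obtain q where "q \<in> B" and q: "1 - s < \<nu> (p - q) s"
      using assms(4) by (auto simp: mem_U_nbhd_iff)
    note q
    also have "\<nu> (p - q) s \<le> F_pt_set \<nu> p B s"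
      unfolding F_pt_set_def using \<open>q \<in> B\<close> by (rule cSUP_upper[OF _ F_pt_set_bounds(1)[OF assms(2)]])
    finally show "1 - s \<le> F_pt_set \<nu> p B s"
      by simp
  qed
  also have "Gamma_star \<nu> A B s \<le> F_star \<nu> A B t"
    unfolding F_star_def using assms(3) Gamma_star_bounds(2)[OF assms(1,2)]
    by (intro cSUP_upper bdd_aboveI2) auto
  finally show ?thesis
    using assms(3) by simp
qed

lemma hausdorff_close_if_H_metric_gt:
  assumes "A \<noteq> {}" "B \<noteq> {}" "1 - t < H_metric \<nu> A B t"
  shows "hausdorff_close (pn_dist \<nu>) A B t"
  unfolding hausdorff_close_def
proof (intro conjI ballI)
  fix p
  assume "p \<in> A"
  moreover have "1 - t < F_star \<nu> A B t"
    using assms(3) by (simp add: H_metric_def)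
  ultimately obtain q where "q \<in> B" "q \<in> U_nbhd \<nu> t p"
    using F_star_gt_imp_mem_U_nbhd[OF assms(1,2)] by blast
  then show "\<exists>q\<in>B. pn_dist \<nu> p q \<le> t"
    using pn_dist_le by blast
next
  fix q
  assume "q \<in> B"
  moreover have "1 - t < F_star \<nu> B A t"
    using assms(3) by (simp add: H_metric_def)
  ultimately obtain p where "p \<in> A" "p \<in> U_nbhd \<nu> t q"
    using F_star_gt_imp_mem_U_nbhd[OF assms(2,1)] by blast
  then show "\<exists>p\<in>A. pn_dist \<nu> p q \<le> t"
    using pn_dist_le pn_dist_commute by metis
qed

lemma H_metric_gt_if_hausdorff_close:
  assumes "A \<noteq> {}" "B \<noteq> {}" "hausdorff_close (pn_dist \<nu>) A B s" "s < t"
  shows "1 - t < H_metric \<nu> A B t"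
proof -
  define s' where "s' = (s + t) / 2"
  have "s < s'" "s' < t"
    using assms(4) by (simp_all add: s'_def)
  then have near: "q \<in> U_nbhd \<nu> s' p" if "pn_dist \<nu> p q \<le> s" for p q
    using that by (simp add: mem_U_nbhd_if_pn_dist_less)
  have "\<forall>p\<in>A. \<exists>q\<in>B. q \<in> U_nbhd \<nu> s' p"
    using assms(3) near unfolding hausdorff_close_def by blast
  moreover have "\<forall>q\<in>B. \<exists>p\<in>A. p \<in> U_nbhd \<nu> s' q"
    using assms(3) near pn_dist_commute unfolding hausdorff_close_def by metis
  ultimately show ?thesis
    using F_star_gt_if_mem_U_nbhd[OF _ _ \<open>s' < t\<close>] assms(1,2) by (simp add: H_metric_def)
qed

lemma H_converges_iff_hausdorff_limit:
  assumes "\<And>n. As n \<noteq> {}" "A \<noteq> {}"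
  shows "H_converges \<nu> As A \<longleftrightarrow> hausdorff_limit (pn_dist \<nu>) As A"
  unfolding H_converges_def hausdorff_limit_def
proof (intro iffI allI impI)
  fix e :: real
  assume "\<forall>t>0. \<exists>N. \<forall>n\<ge>N. 1 - t < H_metric \<nu> (As n) A t" "0 < e"
  then obtain N where "\<forall>n\<ge>N. 1 - e < H_metric \<nu> (As n) A e"
    by blast
  then show "\<exists>N. \<forall>n\<ge>N. hausdorff_close (pn_dist \<nu>) (As n) A e"
    using hausdorff_close_if_H_metric_gt[OF assms] by blast
next
  fix t :: real
  assume "\<forall>e>0. \<exists>N. \<forall>n\<ge>N. hausdorff_close (pn_dist \<nu>) (As n) A e" "0 < t"
  then obtain N where "\<forall>n\<ge>N. hausdorff_close (pn_dist \<nu>) (As n) A (t / 2)"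
    using half_gt_zero by blast
  then show "\<exists>N. \<forall>n\<ge>N. 1 - t < H_metric \<nu> (As n) A t"
    using H_metric_gt_if_hausdorff_close[OF assms, of _ "t / 2" t] \<open>0 < t\<close> by auto
qed

lemma hausdorff_Cauchy_if_H_cauchy:
  assumes "\<And>n. As n \<noteq> {}" "H_cauchy \<nu> As"
  shows "hausdorff_Cauchy (pn_dist \<nu>) As"
  unfolding hausdorff_Cauchy_def
proof (intro allI impI)
  fix e :: real
  assume "0 < e"
  then obtain N where "\<forall>m\<ge>N. \<forall>n\<ge>N. 1 - e < H_metric \<nu> (As m) (As n) e"
    using assms(2) unfolding H_cauchy_def by blast
  then show "\<exists>N. \<forall>m\<ge>N. \<forall>n\<ge>N. hausdorff_close (pn_dist \<nu>) (As m) (As n) e"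
    using hausdorff_close_if_H_metric_gt[OF assms(1,1)] by blast
qed

lemma convex_hausdorff_limit:
  assumes convex: "\<And>n. convex (As n)" and closed: "closedin pn.mtopology A"
    and lim: "hausdorff_limit (pn_dist \<nu>) As A"
  shows "convex A"
  unfolding convex_def
proof (intro ballI allI impI)
  fix x y u v
  assume "x \<in> A" "y \<in> A" "0 \<le> u" "0 \<le> v" "u + v = (1::real)"
  have "\<exists>a\<in>A. pn_dist \<nu> (u *\<^sub>R x + v *\<^sub>R y) a < r" if "0 < r" for r
  proof -
    have "0 < r / 3"
      using \<open>0 < r\<close> by simp
    then obtain N where "\<forall>n\<ge>N. hausdorff_close (pn_dist \<nu>) (As n) A (r / 3)"
      using lim unfolding hausdorff_limit_def by blast
    then have N: "hausdorff_close (pn_dist \<nu>) (As N) A (r / 3)"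
      by blast
    then obtain x' y' where "x' \<in> As N" "y' \<in> As N" "pn_dist \<nu> x' x \<le> r / 3" "pn_dist \<nu> y' y \<le> r / 3"
      using \<open>x \<in> A\<close> \<open>y \<in> A\<close> unfolding hausdorff_close_def by blast
    then have "u *\<^sub>R x' + v *\<^sub>R y' \<in> As N"
      using convex \<open>0 \<le> u\<close> \<open>0 \<le> v\<close> \<open>u + v = 1\<close> by (simp add: convex_def)
    then obtain a where "a \<in> A" "pn_dist \<nu> (u *\<^sub>R x' + v *\<^sub>R y') a \<le> r / 3"
      using N unfolding hausdorff_close_def by blast
    moreover have "pn_dist \<nu> (u *\<^sub>R x + v *\<^sub>R y) (u *\<^sub>R x' + v *\<^sub>R y') \<le> r / 3"
      using pn_dist_convex_combination_le[OF \<open>0 \<le> u\<close> \<open>0 \<le> v\<close> \<open>u + v = 1\<close>, of x y x' y']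
        \<open>pn_dist \<nu> x' x \<le> r / 3\<close> \<open>pn_dist \<nu> y' y \<le> r / 3\<close> by (simp add: pn_dist_commute)
    ultimately show ?thesis
      using pn_dist_triangle[of "u *\<^sub>R x + v *\<^sub>R y" a "u *\<^sub>R x' + v *\<^sub>R y'"] \<open>0 < r\<close>
      by (intro bexI[of _ a]) auto
  qed
  then have "u *\<^sub>R x + v *\<^sub>R y \<in> pn.mtopology closure_of A"
    by (simp add: pn.metric_closure_of)
  then show "u *\<^sub>R x + v *\<^sub>R y \<in> A"
    using closed by (simp add: closure_of_closedin)
qed

lemma H_closed_P_fc: "H_closed_in_P_f \<nu> (P_fc \<nu>)"
  unfolding H_closed_in_P_f_def
proof (intro allI impI)
  fix As A
  assume As: "\<forall>n. As n \<in> P_fc \<nu>" and A: "A \<in> P_f \<nu>" and "H_converges \<nu> As A"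
  have ne: "\<And>n. As n \<noteq> {}" and convex: "\<And>n. convex (As n)"
    using As by (simp_all add: P_fc_def)
  have "A \<noteq> {}" and closed: "closedin pn.mtopology A"
    using A by (simp_all add: P_f_def s_closed_iff_closedin)
  have "hausdorff_limit (pn_dist \<nu>) As A"
    using H_converges_iff_hausdorff_limit[OF ne \<open>A \<noteq> {}\<close>] \<open>H_converges \<nu> As A\<close> by simp
  then have "convex A"
    by (rule convex_hausdorff_limit[OF convex closed])
  with A show "A \<in> P_fc \<nu>"
    by (simp add: P_f_def P_fc_def)
qed

lemma H_complete_P_fc:
  assumes "s_complete \<nu>"
  shows "H_complete \<nu> (P_fc \<nu>)"
  unfolding H_complete_def
proof (intro allI impI)
  fix As
  assume As: "\<forall>n. As n \<in> P_fc \<nu>" and "H_cauchy \<nu> As"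
  have ne: "\<And>n. As n \<noteq> {}" and convex: "\<And>n. convex (As n)"
    using As by (simp_all add: P_fc_def)
  have Cauchy: "hausdorff_Cauchy (pn_dist \<nu>) As"
    using ne \<open>H_cauchy \<nu> As\<close> by (rule hausdorff_Cauchy_if_H_cauchy)
  define A where "A = pn.upper_limit As"
  have closed: "closedin pn.mtopology A"
    by (simp add: A_def pn.closedin_upper_limit)
  have "A \<noteq> {}"
    unfolding A_def using mcomplete_if_s_complete[OF assms] _ ne Cauchy by (rule pn.upper_limit_nonempty) simp
  have lim: "hausdorff_limit (pn_dist \<nu>) As A"
    unfolding A_def using mcomplete_if_s_complete[OF assms] _ Cauchy by (rule pn.hausdorff_limit_upper_limit) simp
  have "A \<in> P_fc \<nu>"
    using convex_hausdorff_limit[OF convex closed lim] closed \<open>A \<noteq> {}\<close>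
    by (simp add: P_fc_def s_closed_iff_closedin)
  moreover have "H_converges \<nu> As A"
    using H_converges_iff_hausdorff_limit[OF ne \<open>A \<noteq> {}\<close>] lim by simp
  ultimately show "\<exists>A\<in>P_fc \<nu>. H_converges \<nu> As A"
    by blast
qed

lemma P_kc_subset_P_fc: "P_kc \<nu> \<subseteq> P_fc \<nu>"
  using compactin_imp_closedin[OF pn.Hausdorff_space_mtopology]
  by (auto simp: P_kc_def P_fc_def s_compact_iff_compactin s_closed_iff_closedin)

lemma H_complete_P_kc:
  assumes "s_complete \<nu>"
  shows "H_complete \<nu> (P_kc \<nu>)"
  unfolding H_complete_def
proof (intro allI impI)
  fix As
  assume As: "\<forall>n. As n \<in> P_kc \<nu>" and "H_cauchy \<nu> As"
  then have "\<forall>n. As n \<in> P_fc \<nu>"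
    using P_kc_subset_P_fc by blast
  then obtain A where A: "A \<in> P_fc \<nu>" and "H_converges \<nu> As A"
    using H_complete_P_fc[OF assms] \<open>H_cauchy \<nu> As\<close> unfolding H_complete_def by blast
  have ne: "\<And>n. As n \<noteq> {}" and compact: "\<And>n. compactin pn.mtopology (As n)"
    using As by (simp_all add: P_kc_def s_compact_iff_compactin)
  have "A \<noteq> {}" and closed: "closedin pn.mtopology A"
    using A by (simp_all add: P_fc_def s_closed_iff_closedin)
  have "hausdorff_limit (pn_dist \<nu>) As A"
    using H_converges_iff_hausdorff_limit[OF ne \<open>A \<noteq> {}\<close>] \<open>H_converges \<nu> As A\<close> by simp
  then have "compactin pn.mtopology A"
    by (rule pn.compactin_hausdorff_limit[OF mcomplete_if_s_complete[OF assms] compact closed])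
  with A have "A \<in> P_kc \<nu>"
    by (simp add: P_fc_def P_kc_def s_compact_iff_compactin)
  with \<open>H_converges \<nu> As A\<close> show "\<exists>A\<in>P_kc \<nu>. H_converges \<nu> As A"
    by blast
qed

end

theorem theorem4p9:
  fixes \<nu> :: "'a::real_vector \<Rightarrow> distf" and \<tau> :: "distf \<Rightarrow> distf \<Rightarrow> distf"
  assumes "serstnev_RN_space \<nu> \<tau>"
    and "sup_continuous_tf \<tau>"
    and "\<And>F G x t. D_plus F \<Longrightarrow> D_plus G \<Longrightarrow> x \<ge> 0 \<Longrightarrow> t \<in> {0..1} \<Longrightarrow>
           min (F (t * x)) (G ((1 - t) * x)) \<le> \<tau> F G x"
  shows "H_closed_in_P_f \<nu> (P_fc \<nu>)
         \<and> (s_complete \<nu> \<longrightarrow> H_complete \<nu> (P_fc \<nu>))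
         \<and> (s_complete \<nu> \<longrightarrow> H_complete \<nu> (P_kc \<nu>))"
proof -
  interpret serstnev_tauM_space \<nu>
    using serstnev_tauM_spaceI[OF assms(1,3)] .
  show ?thesis
    using H_closed_P_fc H_complete_P_fc H_complete_P_kc by blast
qed

end
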